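(* Let $1\le d<\omega$, $2\le k<\omega$, and let $P$ be a $d$-dimensional $k$-template. Then $\chi(L(\mathbb R^d,P))^{+(d-1)}\ge 2^{\aleph_0}$.
   Context: A $d$-dimensional $k$-template is a set $P$ of $d$-tuples with $|P|=k$. If $P,Q$ are $d$-dimensional templates, $Q$ is a homomorphic image of $P$ if there is a surjection $f:P\to Q$ such that for all $x,y\in P$ and $i<d$, $x_i=y_i$ implies $f(x)_i=f(y)_i$. $L(\mathbb R^d,P)$ is the $k$-hypergraph with vertex set $\mathbb R^d$ whose edges are the $k$-templates $Q\subseteq\mathbb R^d$ that are homomorphic images of $P$. $\chi$ is the chromatic number (least cardinal number of colors in a vertex coloring not constant on any edge). $\kappa^+$ is the successor cardinal, $\kappa^{+0}=\kappa$, $\kappa^{+(n+1)}=(\kappa^{+n})^+$. *)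

theory Defs
  imports Complex_Main
begin

definition Rd :: "nat \<Rightarrow> real list set" where
  "Rd d = {x. length x = d}"

definition template :: "nat \<Rightarrow> nat \<Rightarrow> 'a list set \<Rightarrow> bool" where
  "template d k P \<longleftrightarrow> finite P \<and> card P = k \<and> (\<forall>x\<in>P. length x = d)"

definition hom_image :: "nat \<Rightarrow> 'a list set \<Rightarrow> 'b list set \<Rightarrow> bool" where
  "hom_image d P Q \<longleftrightarrow> (\<exists>f. f ` P = Q \<and>
      (\<forall>x\<in>P. \<forall>y\<in>P. \<forall>i<d. x ! i = y ! i \<longrightarrow> f x ! i = f y ! i))"

definition L_edges :: "nat \<Rightarrow> 'a list set \<Rightarrow> real list set set" where
  "L_edges d P = {Q. Q \<subseteq> Rd d \<and> template d (card P) Q \<and> hom_image d P Q}"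

definition proper_coloring :: "'v set set \<Rightarrow> ('v \<Rightarrow> 'c) \<Rightarrow> bool" where
  "proper_coloring E f \<longleftrightarrow> (\<forall>e\<in>E. \<not> (\<exists>c. \<forall>x\<in>e. f x = c))"

text \<open>Chromatic number of the hypergraph (V,E): the least cardinal |f ` V| over
  proper colourings f with colours from the type 'c (represented as a cardinal
  order relation on a subset of 'c).\<close>
definition chromatic_number :: "'v set \<Rightarrow> 'v set set \<Rightarrow> 'c rel" where
  "chromatic_number V E = (SOME r. (\<exists>f::'v \<Rightarrow> 'c. proper_coloring E f \<and> r = card_of (f ` V)) \<and>
       (\<forall>f::'v \<Rightarrow> 'c. proper_coloring E f \<longrightarrow> (r, card_of (f ` V)) \<in> ordLeq))"

text \<open>Cardinal successor realised inside the type 'a, capped at |UNIV::'a set|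
  (the successor is realised up to isomorphism if it fits into 'a, otherwise
  the cap |UNIV| is returned).\<close>
definition cardSuc_cap :: "'a rel \<Rightarrow> 'a rel" where
  "cardSuc_cap r = (if \<exists>s::'a rel. Card_order s \<and> (s, cardSuc r) \<in> ordIso
      then (SOME s::'a rel. Card_order s \<and> (s, cardSuc r) \<in> ordIso) else card_of (UNIV :: 'a set))"

definition cardSuc_iter :: "nat \<Rightarrow> 'a rel \<Rightarrow> 'a rel" where
  "cardSuc_iter n r = (cardSuc_cap ^^ n) r"

end

theory Submission
  imports Defs "HOL-Analysis.Abstract_Topology_2"
begin

text \<open>
  Let f be a proper colouring of L(R^d, P) with colour set C, and let k = m + 1. Suppose the
  sets of reals A_0, ..., A_(d-1) are so large that |A_j| exceeds m times the number of pairs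
  of a colour and a choice of k-element sets S_i in A_i for all i < j. Induction on the number
  of coordinates, with the pigeonhole principle in the last one, yields k-element sets S_j in
  A_j such that f is constant on the box S_0 x ... x S_(d-1). Every coordinate projection of P
  has at most k values, so the box contains a homomorphic image of P, contradicting properness.
  Such sets exist: finite ones of rapidly growing size if C is finite, and sets of size
  |C|^(+(j+1)) if C is infinite and |C|^(+(d-1)) is below the continuum.
\<close>

unbundle cardinal_syntax

lemma card_of_ordLess_if_card_less:
  assumes "finite X" and "card X < card Y"
  shows "|X| <o |Y|"
  using assms card_inj_on_le card_of_ordLess[of Y X] by (metis leD)

lemma card_of_finite_ordLeq_infinite:
  assumes "finite A" and "Card_order r" and "infinite (Field r)"
  shows "|A| \<le>o r"
  using assms finite_ordLess_infinite[OF card_of_Well_order card_order_on_well_order_on]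
  by (metis Field_card_of ordLess_imp_ordLeq)

lemma card_of_lists_length_ordLeq:
  assumes "Card_order r" and "infinite (Field r)" and "|X| \<le>o r"
  shows "|{xs. length xs = n \<and> set xs \<subseteq> X}| \<le>o r"
proof (induction n)
  case 0
  have "{xs. length xs = 0 \<and> set xs \<subseteq> X} = {[]}"
    by auto
  then show ?case
    using assms card_of_finite_ordLeq_infinite[of "{[]}"] by simp
next
  case (Suc n)
  let ?L = "\<lambda>n. {xs. length xs = n \<and> set xs \<subseteq> X}"
  have "?L (Suc n) = (\<lambda>(x, xs). x # xs) ` (X \<times> ?L n)"
    by (auto simp: length_Suc_conv)
  then have "|?L (Suc n)| \<le>o |X \<times> ?L n|"
    by (simp add: card_of_image)
  moreover have "|X \<times> ?L n| \<le>o r"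
    using assms Suc.IH by (intro card_of_Times_ordLeq_infinite_Field)
  ultimately show ?case
    by (rule ordLeq_transitive)
qed

lemma card_of_lists_ordLeq:
  assumes "Card_order r" and "infinite (Field r)" and "|X| \<le>o r"
  shows "|lists X| \<le>o r"
proof -
  have "|UNIV :: nat set| \<le>o r"
    using ordLeq_ordIso_trans[OF infinite_iff_card_of_nat[THEN iffD1] card_of_Field_ordIso] assms
    by blast
  then have "|\<Union>n\<in>UNIV. {xs. length xs = n \<and> set xs \<subseteq> X}| \<le>o r"
    using assms card_of_lists_length_ordLeq by (intro card_of_UNION_ordLeq_infinite_Field) auto
  moreover have "lists X = (\<Union>n\<in>UNIV. {xs. length xs = n \<and> set xs \<subseteq> X})"
    by auto
  ultimately show ?thesis
    by simp
qed

lemma large_fibre: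
  assumes "|T \<times> {..<m}| <o |Y|" and "h ` Y \<subseteq> T"
  obtains t Z where "t \<in> T" "Z \<subseteq> Y" "finite Z" "card Z = Suc m" "\<forall>y\<in>Z. h y = t"
proof (rule ccontr)
  assume no_fibre: "\<not> thesis"
  note fibre = that
  define F where "F t = {y\<in>Y. h y = t}" for t
  have "F t \<lesssim> {t} \<times> {..<m}" if "t \<in> T" for t
  proof -
    have no_large_subset: "\<not> (Z \<subseteq> F t \<and> finite Z \<and> card Z = Suc m)" for Z
      using no_fibre fibre[OF \<open>t \<in> T\<close>] by (auto simp: F_def)
    have "finite (F t)"
      using infinite_arbitrarily_large no_large_subset by blast
    moreover have "card (F t) \<le> m"
    proof (rule ccontr)
      assume "\<not> card (F t) \<le> m"
      then obtain Z where "Z \<subseteq> F t" "card Z = Suc m" "finite Z"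
        using obtain_subset_with_card_n[of "Suc m" "F t"] by auto
      then show False
        using no_large_subset by blast
    qed
    ultimately have "F t \<lesssim> {..<m}"
      by (simp add: lepoll_iff_finite_card)
    then show ?thesis
      using lepoll_trans2 eqpoll_sym[OF times_singleton_eqpoll] by metis
  qed
  then have "(\<Union>t\<in>T. F t) \<lesssim> (\<Union>t\<in>T. {t} \<times> {..<m})"
    by (intro UN_lepoll_UN) (auto simp: pairwise_def disjnt_def)
  moreover have "(\<Union>t\<in>T. F t) = Y"
    using assms(2) by (auto simp: F_def)
  moreover have "(\<Union>t\<in>T. {t} \<times> {..<m}) = T \<times> {..<m}"
    by blast
  ultimately have "Y \<lesssim> T \<times> {..<m}"
    by simp
  then have "|Y| \<le>o |T \<times> {..<m}|"
    unfolding lepoll_def card_of_ordLeq[symmetric] .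
  then show False
    using assms(1) not_ordLess_ordLeq by blast
qed

definition k_boxes :: "(nat \<Rightarrow> 'x set) \<Rightarrow> nat \<Rightarrow> nat \<Rightarrow> 'x set list set" where
  "k_boxes A k n = {Ss. length Ss = n \<and> (\<forall>i<n. Ss ! i \<subseteq> A i \<and> finite (Ss ! i) \<and> card (Ss ! i) = k)}"

definition list_box :: "'x set list \<Rightarrow> 'x list set" where
  "list_box Ss = {xs. length xs = length Ss \<and> (\<forall>i<length Ss. xs ! i \<in> Ss ! i)}"

lemma snoc_in_k_boxes_iff:
  "Ss @ [Z] \<in> k_boxes A k (Suc n) \<longleftrightarrow>
     Ss \<in> k_boxes A k n \<and> Z \<subseteq> A n \<and> finite Z \<and> card Z = k"
proof -
  have "(\<forall>i<Suc (length Ss).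
          (Ss @ [Z]) ! i \<subseteq> A i \<and> finite ((Ss @ [Z]) ! i) \<and> card ((Ss @ [Z]) ! i) = k)
      \<longleftrightarrow> (\<forall>i<length Ss. Ss ! i \<subseteq> A i \<and> finite (Ss ! i) \<and> card (Ss ! i) = k) \<and>
         Z \<subseteq> A (length Ss) \<and> finite Z \<and> card Z = k"
    unfolding All_less_Suc by (auto simp: nth_append)
  then show ?thesis
    by (auto simp: k_boxes_def)
qed

lemma snoc_in_list_box_iff:
  "xs @ [y] \<in> list_box (Ss @ [Z]) \<longleftrightarrow> xs \<in> list_box Ss \<and> y \<in> Z"
  by (auto simp: list_box_def nth_append less_Suc_eq)

lemma list_box_snoc_cases:
  assumes "xs \<in> list_box (Ss @ [Z])"
  obtains ys y where "xs = ys @ [y]"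
  using assms by (cases xs rule: rev_cases) (auto simp: list_box_def)

lemma monochromatic_box:
  fixes g :: "'x list \<Rightarrow> 'c"
  assumes "\<forall>j<n. |(C \<times> k_boxes A (Suc m) j) \<times> {..<m}| <o |A j|"
    and "\<And>xs. length xs = n \<Longrightarrow> \<forall>i<n. xs ! i \<in> A i \<Longrightarrow> g xs \<in> C"
  shows "\<exists>Ss\<in>k_boxes A (Suc m) n. \<exists>c\<in>C. \<forall>xs\<in>list_box Ss. g xs = c"
  using assms
proof (induction n arbitrary: g)
  case 0
  then show ?case
    by (intro bexI[of _ "[]"]) (auto simp: list_box_def k_boxes_def)
next
  case (Suc n)
  have "\<exists>Ss\<in>k_boxes A (Suc m) n. \<exists>c\<in>C. \<forall>xs\<in>list_box Ss. g (xs @ [y]) = c" if "y \<in> A n" for y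
  proof (rule Suc.IH)
    fix xs :: "'x list" assume "length xs = n" "\<forall>i<n. xs ! i \<in> A i"
    then show "g (xs @ [y]) \<in> C"
      using Suc.prems(2) \<open>y \<in> A n\<close> by (auto simp: nth_append less_Suc_eq)
  qed (use Suc.prems(1) in simp)
  then have "\<forall>y\<in>A n. \<exists>t\<in>C \<times> k_boxes A (Suc m) n. \<forall>xs\<in>list_box (snd t). g (xs @ [y]) = fst t"
    by force
  then obtain h where h: "\<forall>y\<in>A n. h y \<in> C \<times> k_boxes A (Suc m) n \<and>
      (\<forall>xs\<in>list_box (snd (h y)). g (xs @ [y]) = fst (h y))"
    by (metis (no_types, lifting) bchoice)
  then have "h ` A n \<subseteq> C \<times> k_boxes A (Suc m) n"
    by blast
  then obtain t Z where t: "t \<in> C \<times> k_boxes A (Suc m) n"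
    and Z: "Z \<subseteq> A n" "finite Z" "card Z = Suc m" "\<forall>y\<in>Z. h y = t"
    using large_fibre Suc.prems(1) by (metis lessI)
  obtain c Ss where t_eq: "t = (c, Ss)"
    by fastforce
  have "g xs = c" if xs_in: "xs \<in> list_box (Ss @ [Z])" for xs
  proof -
    obtain ys y where xs: "xs = ys @ [y]"
      using xs_in by (rule list_box_snoc_cases)
    then have "ys \<in> list_box Ss" "y \<in> Z"
      using xs_in by (simp_all add: snoc_in_list_box_iff)
    then show ?thesis
      using h Z t_eq xs by auto
  qed
  moreover have "Ss @ [Z] \<in> k_boxes A (Suc m) (Suc n)"
    using t t_eq Z by (simp add: snoc_in_k_boxes_iff)
  ultimately show ?case
    using t t_eq by blast
qed

lemma edge_inside_box:
  fixes P :: "'a list set"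
  assumes P: "template d k P" and Ss: "Ss \<in> k_boxes A k d"
  shows "\<exists>Q\<in>L_edges d P. Q \<subseteq> list_box Ss"
proof -
  have "\<exists>\<phi>. \<phi> ` (\<lambda>x. x ! i) ` P \<subseteq> Ss ! i \<and> inj_on \<phi> ((\<lambda>x. x ! i) ` P)" if "i < d" for i
    using P Ss that card_image_le[of P "\<lambda>x. x ! i"]
    by (intro card_le_inj) (auto simp: template_def k_boxes_def)
  then obtain \<phi> where \<phi>: "\<And>i. i < d \<Longrightarrow>
      \<phi> i ` (\<lambda>x. x ! i) ` P \<subseteq> Ss ! i \<and> inj_on (\<phi> i) ((\<lambda>x. x ! i) ` P)"
    by metis
  define F where "F x = map (\<lambda>i. \<phi> i (x ! i)) [0..<d]" for x :: "'a list"
  have F_nth: "F x ! i = \<phi> i (x ! i)" if "i < d" for x i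
    using that by (simp add: F_def)
  have "inj_on F P"
  proof (rule inj_onI)
    fix x y assume "x \<in> P" "y \<in> P" "F x = F y"
    have "x ! i = y ! i" if "i < d" for i
    proof (rule inj_onD)
      show "inj_on (\<phi> i) ((\<lambda>x. x ! i) ` P)"
        using \<phi> that by blast
      show "\<phi> i (x ! i) = \<phi> i (y ! i)"
        using \<open>F x = F y\<close> that by (metis F_nth)
    qed (use \<open>x \<in> P\<close> \<open>y \<in> P\<close> in auto)
    then show "x = y"
      using \<open>x \<in> P\<close> \<open>y \<in> P\<close> P by (intro nth_equalityI) (auto simp: template_def)
  qed
  moreover have "length (F x) = d" for x
    by (simp add: F_def)
  ultimately have "F ` P \<in> L_edges d P"
    using P card_image[of F P] F_nth unfolding L_edges_def template_def hom_image_def Rd_def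
    by (auto intro!: exI[of _ F])
  moreover have "F ` P \<subseteq> list_box Ss"
  proof
    fix z assume "z \<in> F ` P"
    then obtain x where "x \<in> P" "z = F x"
      by blast
    then have "\<phi> i (x ! i) \<in> Ss ! i" if "i < d" for i
      using \<phi>[OF that] by blast
    then show "z \<in> list_box Ss"
      using Ss \<open>z = F x\<close> by (simp add: list_box_def k_boxes_def F_def)
  qed
  ultimately show ?thesis
    by blast
qed

lemma no_large_sides_for_proper_coloring:
  fixes f :: "real list \<Rightarrow> 'c" and P :: "'a list set" and A :: "nat \<Rightarrow> real set"
  assumes "template d (Suc m) P" and "proper_coloring (L_edges d P) f"
  shows "\<not> (\<forall>j<d. |(f ` Rd d \<times> k_boxes A (Suc m) j) \<times> {..<m}| <o |A j| )"
proof
  assume "\<forall>j<d. |(f ` Rd d \<times> k_boxes A (Suc m) j) \<times> {..<m}| <o |A j|"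
  then obtain Ss c where "Ss \<in> k_boxes A (Suc m) d" "\<forall>xs\<in>list_box Ss. f xs = c"
    using monochromatic_box[of d "f ` Rd d" A m f] by (auto simp: Rd_def)
  moreover obtain Q where "Q \<in> L_edges d P" "Q \<subseteq> list_box Ss"
    using edge_inside_box assms(1) calculation(1) by blast
  ultimately show False
    using assms(2) unfolding proper_coloring_def by blast
qed

lemma cardSuc_cap_if_representable:
  fixes r :: "'a rel"
  assumes "\<exists>s::'a rel. Card_order s \<and> s =o cardSuc r"
  shows "Card_order (cardSuc_cap r) \<and> cardSuc_cap r =o cardSuc r"
proof -
  have "cardSuc_cap r = (SOME s::'a rel. Card_order s \<and> s =o cardSuc r)"
    unfolding cardSuc_cap_def using assms by (rule if_P)
  then show ?thesis
    using someI_ex[OF assms] by simp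
qed

lemma cardSuc_cap_if_not_representable:
  fixes r :: "'a rel"
  shows "\<not> (\<exists>s::'a rel. Card_order s \<and> s =o cardSuc r) \<Longrightarrow> cardSuc_cap r = |UNIV :: 'a set|"
  unfolding cardSuc_cap_def by (rule if_not_P)

lemma Card_order_cardSuc_cap: "Card_order (cardSuc_cap r)"
  using cardSuc_cap_if_representable cardSuc_cap_if_not_representable card_of_Card_order
  by metis

lemma ordLeq_cardSuc_cap:
  assumes "Card_order (r :: 'a rel)"
  shows "r \<le>o cardSuc_cap r"
proof (cases "\<exists>s::'a rel. Card_order s \<and> s =o cardSuc r")
  case True
  then show ?thesis
    using cardSuc_ordLeq[OF assms] cardSuc_cap_if_representable ordIso_symmetric ordLeq_ordIso_trans
    by blast
next
  case False
  have "r =o |Field r|"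
    using card_of_Field_ordIso[OF assms] ordIso_symmetric by blast
  then show ?thesis
    using False cardSuc_cap_if_not_representable card_of_mono1[of "Field r" UNIV] ordIso_ordLeq_trans
    by fastforce
qed

lemma cardSuc_ordLeq_cardSuc_cap:
  assumes "cardSuc_cap (r :: 'a rel) \<noteq> |UNIV :: 'a set|"
  shows "cardSuc r \<le>o cardSuc_cap r"
  using assms cardSuc_cap_if_representable cardSuc_cap_if_not_representable
    ordIso_iff_ordLeq ordIso_symmetric
  by metis

lemma cardSuc_iter_0 [simp]: "cardSuc_iter 0 r = r"
  and cardSuc_iter_Suc [simp]: "cardSuc_iter (Suc n) r = cardSuc_cap (cardSuc_iter n r)"
  by (simp_all add: cardSuc_iter_def)

lemma Card_order_cardSuc_iter: "Card_order r \<Longrightarrow> Card_order (cardSuc_iter n r)"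
  by (cases n) (simp_all add: Card_order_cardSuc_cap)

lemma cardSuc_iter_mono:
  assumes "Card_order r" and "i \<le> j"
  shows "cardSuc_iter i r \<le>o cardSuc_iter j r"
  using assms(2)
proof (induction j)
  case 0
  then show ?case
    using assms(1) card_order_on_well_order_on ordLeq_reflexive by fastforce
next
  case (Suc j)
  show ?case
  proof (cases "i = Suc j")
    case True
    then show ?thesis
      using Card_order_cardSuc_iter[OF assms(1)] card_order_on_well_order_on ordLeq_reflexive
      by blast
  next
    case False
    then have "cardSuc_iter i r \<le>o cardSuc_iter j r"
      using Suc by simp
    then show ?thesis
      using ordLeq_cardSuc_cap[OF Card_order_cardSuc_iter[OF assms(1)]] ordLeq_transitive
      by fastforce
  qed
qed

(* The cap |UNIV| is only taken when the successor does not fit into the type, so below it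
   the iteration consists of genuine successors. *)
lemma cardSuc_ordLeq_cardSuc_iter:
  assumes "Card_order (r :: 'a rel)" and "cardSuc_iter n r <o |UNIV :: 'a set|" and "j < n"
  shows "cardSuc (cardSuc_iter j r) \<le>o cardSuc_iter (Suc j) r"
proof -
  have "cardSuc_iter (Suc j) r <o |UNIV :: 'a set|"
    using cardSuc_iter_mono[OF assms(1), of "Suc j" n] assms(2,3) ordLeq_ordLess_trans by auto
  then have "cardSuc_cap (cardSuc_iter j r) \<noteq> |UNIV :: 'a set|"
    using ordLess_irreflexive by fastforce
  then show ?thesis
    by (simp add: cardSuc_ordLeq_cardSuc_cap)
qed

lemma k_boxes_subset_lists:
  assumes "\<forall>i<j. A i \<subseteq> B"
  shows "k_boxes A k j \<subseteq> {Ss. set Ss \<subseteq> Pow B \<and> length Ss = j}"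
  using assms by (auto simp: k_boxes_def in_set_conv_nth) blast

lemma card_of_k_boxes_ordLeq:
  fixes A :: "nat \<Rightarrow> 'x::linorder set"
  assumes r: "Card_order r" "infinite (Field r)" and A: "\<forall>i<j. |A i| \<le>o r"
  shows "|k_boxes A k j| \<le>o r"
proof -
  define U where "U = (\<Union>i\<in>{..<j}. A i)"
  have "|U| \<le>o r"
    unfolding U_def using r A card_of_finite_ordLeq_infinite[of "{..<j}"]
    by (intro card_of_UNION_ordLeq_infinite_Field) auto
  then have lists_le: "|lists (lists U)| \<le>o r"
    using r by (intro card_of_lists_ordLeq)
  have "inj_on (map sorted_list_of_set) (k_boxes A k j)"
  proof (rule inj_onI)
    fix Ss Ts assume "Ss \<in> k_boxes A k j" "Ts \<in> k_boxes A k j"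
      and "map sorted_list_of_set Ss = map sorted_list_of_set Ts"
    moreover have "\<forall>S \<in> set Ss \<union> set Ts. finite S"
      using calculation(1,2) by (auto simp: k_boxes_def in_set_conv_nth)
    then have "inj_on sorted_list_of_set (set Ss \<union> set Ts)"
      by (metis inj_onI sorted_list_of_set.set_sorted_key_list_of_set)
    ultimately show "Ss = Ts"
      by (blast intro: map_inj_on)
  qed
  moreover have "map sorted_list_of_set ` k_boxes A k j \<subseteq> lists (lists U)"
  proof (rule image_subsetI)
    fix Ss assume "Ss \<in> k_boxes A k j"
    then have "finite S \<and> S \<subseteq> U" if "S \<in> set Ss" for S
      using that by (auto simp: k_boxes_def U_def in_set_conv_nth)
    then show "map sorted_list_of_set Ss \<in> lists (lists U)"
      by fastforce
  qed
  ultimately have "|k_boxes A k j| \<le>o |lists (lists U)|"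
    using card_of_ordLeq by blast
  then show ?thesis
    using lists_le by (rule ordLeq_transitive)
qed

(* The (j+1)-st size exceeds a times the number of (j+1)-tuples of subsets of a set of the
   j-th size. *)
fun finite_side_size :: "nat \<Rightarrow> nat \<Rightarrow> nat" where
  "finite_side_size a 0 = a + 1"
| "finite_side_size a (Suc j) = finite_side_size a j + a * (2 ^ finite_side_size a j) ^ Suc j + 1"

lemma finite_side_size_mono: "i \<le> j \<Longrightarrow> finite_side_size a i \<le> finite_side_size a j"
  by (rule lift_Suc_mono_le[of "finite_side_size a"]) auto

lemma finite_colours_large_sides:
  fixes C :: "'c set"
  assumes "finite C"
  shows "\<exists>A :: nat \<Rightarrow> 'x::semiring_char_0 set. \<forall>j. |(C \<times> k_boxes A (Suc m) j) \<times> {..<m}| <o |A j|"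
proof -
  define a where "a = card C * m"
  define N where "N = finite_side_size a"
  define A where "A j = (of_nat :: nat \<Rightarrow> 'x) ` {..<N j}" for j
  have card_A: "card (A j) = N j" for j
    unfolding A_def by (simp add: card_image inj_on_def)
  have "|(C \<times> k_boxes A (Suc m) j) \<times> {..<m}| <o |A j|" for j
  proof -
    have "\<forall>i<j. A i \<subseteq> A (j - 1)"
      unfolding A_def N_def by (auto intro!: image_mono finite_side_size_mono)
    then have boxes: "k_boxes A (Suc m) j \<subseteq> {Ss. set Ss \<subseteq> Pow (A (j - 1)) \<and> length Ss = j}"
      by (rule k_boxes_subset_lists)
    have finite_boxes: "finite (k_boxes A (Suc m) j)"
      using finite_subset[OF boxes] by (simp add: A_def finite_lists_length_eq)
    have "card (k_boxes A (Suc m) j) \<le> (2 ^ N (j - 1)) ^ j"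
      using card_mono[OF _ boxes] card_A
      by (simp add: A_def finite_lists_length_eq card_lists_length_eq card_Pow)
    then have "card ((C \<times> k_boxes A (Suc m) j) \<times> {..<m}) \<le> a * (2 ^ N (j - 1)) ^ j"
      by (simp add: card_cartesian_product a_def)
    also have "\<dots> < card (A j)"
      unfolding card_A N_def by (cases j) auto
    finally show ?thesis
      using assms finite_boxes by (intro card_of_ordLess_if_card_less) auto
  qed
  then show ?thesis
    by blast
qed

lemma exists_set_card_of_ordIso:
  assumes "Card_order r" and "r \<le>o |UNIV :: 'x set|"
  shows "\<exists>B :: 'x set. |B| =o r"
proof -
  have "|Field r| =o r"
    using assms(1) by (rule card_of_Field_ordIso)
  moreover from this have "|Field r| \<le>o |UNIV :: 'x set|"
    using assms(2) ordIso_ordLeq_trans by blast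
  then obtain B :: "'x set" where "|Field r| =o |B|"
    by (auto simp: internalize_card_of_ordLeq2[of "Field r"])
  ultimately show ?thesis
    using ordIso_symmetric ordIso_transitive by blast
qed

lemma infinite_colours_large_sides:
  fixes C :: "'c set"
  assumes C: "infinite C"
    and below: "cardSuc_iter (d - 1) |C| <o |UNIV :: 'x::linorder set|"
    and types: "|UNIV :: 'x set| \<le>o |UNIV :: 'c set|"
  shows "\<exists>A :: nat \<Rightarrow> 'x set. \<forall>j<d. |(C \<times> k_boxes A (Suc m) j) \<times> {..<m}| <o |A j|"
proof -
  define \<kappa> where "\<kappa> j = cardSuc_iter j |C|" for j
  have \<kappa>_card: "Card_order (\<kappa> j)" for j
    unfolding \<kappa>_def by (intro Card_order_cardSuc_iter card_of_Card_order)
  have \<kappa>_mono: "i \<le> j \<Longrightarrow> \<kappa> i \<le>o \<kappa> j" for i j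
    unfolding \<kappa>_def by (simp add: cardSuc_iter_mono card_of_Card_order)
  have "\<kappa> j <o |UNIV :: 'x set|" if "j < d" for j
    using that by (intro ordLeq_ordLess_trans[OF \<kappa>_mono below[folded \<kappa>_def]]) simp
  then have "cardSuc (\<kappa> j) \<le>o |UNIV :: 'x set|" if "j < d" for j
    using \<kappa>_card that by (intro cardSuc_least card_of_Card_order)
  then have "\<exists>B :: 'x set. |B| =o cardSuc (\<kappa> j)" if "j < d" for j
    using that \<kappa>_card by (intro exists_set_card_of_ordIso cardSuc_Card_order) auto
  then obtain A :: "nat \<Rightarrow> 'x set" where A: "\<And>j. j < d \<Longrightarrow> |A j| =o cardSuc (\<kappa> j)"
    by metis
  have "\<kappa> (d - 1) <o |UNIV :: 'c set|"
    using below types unfolding \<kappa>_def by (rule ordLess_ordLeq_trans)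
  have A_below: "|A i| \<le>o \<kappa> j" if "i < j" "j < d" for i j
  proof -
    have "|A i| \<le>o cardSuc (\<kappa> i)"
      using that by (intro ordIso_imp_ordLeq A) simp
    also have "cardSuc (\<kappa> i) \<le>o \<kappa> (Suc i)"
      using \<open>\<kappa> (d - 1) <o |UNIV :: 'c set|\<close> that unfolding \<kappa>_def
      by (intro cardSuc_ordLeq_cardSuc_iter[where n = "d - 1"] card_of_Card_order) auto
    also have "\<kappa> (Suc i) \<le>o \<kappa> j"
      using that by (intro \<kappa>_mono) auto
    finally show ?thesis .
  qed
  have "|(C \<times> k_boxes A (Suc m) j) \<times> {..<m}| <o |A j|" if "j < d" for j
  proof -
    have C_below: "|C| \<le>o \<kappa> j"
      using \<kappa>_mono[of 0 j] by (simp add: \<kappa>_def)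
    then have infinite: "infinite (Field (\<kappa> j))"
      using C card_of_ordLeq_infinite ordLeq_ordIso_trans[OF C_below]
        card_of_Field_ordIso[OF \<kappa>_card, THEN ordIso_symmetric] by blast
    have "|k_boxes A (Suc m) j| \<le>o \<kappa> j"
      using \<kappa>_card infinite A_below that by (intro card_of_k_boxes_ordLeq) auto
    then have "|(C \<times> k_boxes A (Suc m) j) \<times> {..<m}| \<le>o \<kappa> j"
      using \<kappa>_card infinite C_below card_of_finite_ordLeq_infinite[of "{..<m}"]
      by (intro card_of_Times_ordLeq_infinite_Field) auto
    also have "\<kappa> j <o cardSuc (\<kappa> j)"
      using \<kappa>_card by (rule cardSuc_greater)
    also have "cardSuc (\<kappa> j) =o |A j|"
      using A[OF that] by (rule ordIso_symmetric)
    finally show ?thesis .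
  qed
  then show ?thesis
    by blast
qed

(* The colour type must be large enough for the capped successors of the number of colours to
   reach the continuum. *)
lemma continuum_ordLeq_cardSuc_iter_colours:
  fixes f :: "real list \<Rightarrow> 'c" and P :: "'a list set"
  assumes P: "template d k P" "2 \<le> k" and f: "proper_coloring (L_edges d P) f"
    and types: "|UNIV :: real set| \<le>o |UNIV :: 'c set|"
  shows "|Pow (UNIV :: nat set)| \<le>o cardSuc_iter (d - 1) |f ` Rd d|"
proof -
  obtain m where k: "k = Suc m"
    using P(2) by (cases k) auto
  then have no_sides: "\<not> (\<forall>j<d. |(f ` Rd d \<times> k_boxes A (Suc m) j) \<times> {..<m}| <o |A j| )"
    for A :: "nat \<Rightarrow> real set"
    using no_large_sides_for_proper_coloring P(1) f by blast
  show ?thesis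
  proof (cases "finite (f ` Rd d)")
    case True
    then show ?thesis
      using finite_colours_large_sides[of "f ` Rd d" m] no_sides by blast
  next
    case False
    show ?thesis
    proof (rule ccontr)
      assume "\<not> ?thesis"
      then have "cardSuc_iter (d - 1) |f ` Rd d| <o |Pow (UNIV :: nat set)|"
        using not_ordLeq_iff_ordLess card_of_Well_order
          Card_order_cardSuc_iter[OF card_of_Card_order] card_order_on_well_order_on by blast
      moreover have "|Pow (UNIV :: nat set)| =o |UNIV :: real set|"
        using nat_sets_eqpoll_reals by (simp add: eqpoll_iff_card_of_ordIso)
      ultimately have "cardSuc_iter (d - 1) |f ` Rd d| <o |UNIV :: real set|"
        by (rule ordLess_ordIso_trans)
      then show False
        using infinite_colours_large_sides[OF False _ types] no_sides by blast
    qed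
  qed
qed

lemma chromatic_number_attained:
  fixes E :: "'v set set"
  assumes "\<exists>f :: 'v \<Rightarrow> 'c. proper_coloring E f"
  shows "\<exists>f :: 'v \<Rightarrow> 'c. proper_coloring E f \<and> chromatic_number V E = |f ` V|"
proof -
  define R where "R = {|f ` V| | f :: 'v \<Rightarrow> 'c. proper_coloring E f}"
  have "R \<noteq> {}" "\<forall>r\<in>R. Card_order r"
    using assms card_of_Card_order unfolding R_def by auto
  then obtain r where "r \<in> R" and r_least: "\<forall>r'\<in>R. r \<le>o r'"
    using exists_minim_Card_order by blast
  then obtain f0 :: "'v \<Rightarrow> 'c" where "proper_coloring E f0" "r = |f0 ` V|"
    unfolding R_def by blast
  moreover have "\<forall>f :: 'v \<Rightarrow> 'c. proper_coloring E f \<longrightarrow> r \<le>o |f ` V|"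
    using r_least unfolding R_def by blast
  ultimately have "\<exists>r. (\<exists>f :: 'v \<Rightarrow> 'c. proper_coloring E f \<and> r = |f ` V| ) \<and>
      (\<forall>f :: 'v \<Rightarrow> 'c. proper_coloring E f \<longrightarrow> r \<le>o |f ` V| )"
    by blast
  from someI_ex[OF this] show ?thesis
    unfolding chromatic_number_def by blast
qed

lemma proper_coloring_if_inj:
  assumes "inj f" and "\<And>e. e \<in> E \<Longrightarrow> \<exists>x\<in>e. \<exists>y\<in>e. x \<noteq> y"
  shows "proper_coloring E f"
  using assms unfolding proper_coloring_def by (metis injD)

lemma L_edges_nontrivial:
  assumes "2 \<le> card P" and "Q \<in> L_edges d P"
  shows "\<exists>x\<in>Q. \<exists>y\<in>Q. x \<noteq> y"
proof -
  have "finite Q" "card Q = card P"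
    using assms(2) by (auto simp: L_edges_def template_def)
  then show ?thesis
    using assms(1) card_le_Suc0_iff_eq[of Q] by auto
qed

theorem corollary1p3:
  fixes d k :: nat and P :: "'a list set"
  assumes "1 \<le> d" and "2 \<le> k" and "template d k P"
  shows "(card_of (Pow (UNIV :: nat set)),
           cardSuc_iter (d - 1) (chromatic_number (Rd d) (L_edges d P) :: real set rel))
         \<in> ordLeq"
proof -
  have reals_below: "|UNIV :: real set| \<le>o |UNIV :: real set set|"
    using card_of_Pow[of "UNIV :: real set"] by (simp add: ordLess_imp_ordLeq)
  have "|lists (UNIV :: real set)| \<le>o |UNIV :: real set|"
    by (intro card_of_lists_ordLeq card_of_Card_order card_of_mono1)
      (simp_all add: Field_card_of infinite_UNIV_char_0)
  then obtain e :: "real list \<Rightarrow> real set" where "inj e"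
    using ordLeq_transitive[OF _ reals_below] card_of_ordLeq[of "UNIV :: real list set"]
    by (metis lists_UNIV)
  then have "proper_coloring (L_edges d P) e"
    using assms(2,3) L_edges_nontrivial by (intro proper_coloring_if_inj) (auto simp: template_def)
  then obtain f :: "real list \<Rightarrow> real set" where "proper_coloring (L_edges d P) f"
    and "chromatic_number (Rd d) (L_edges d P) = |f ` Rd d|"
    using chromatic_number_attained by blast
  then show ?thesis
    using continuum_ordLeq_cardSuc_iter_colours assms(2,3) reals_below by metis
qed

end
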